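(* Consider the multi-queue bandit described in the context, with any problem instance $(\boldsymbol\lambda,\boldsymbol\mu)$. For any scheduling policy, any queue $u\in[U]$ and any $t\ge1$, $$\Psi_u(t)\ge\lambda_u\sum_{k\ne k^*_u}\Delta_{uk}\,\mathbb{P}\left[\kappa_u(t)=k\right].$$
   Context: Discrete-time system with $U$ queues and $K$ servers, $1\le U\le K$. Arrivals $A_u(t)\in\{0,1\}$ to queue $u$ are Bernoulli($\lambda_u$), and the service $R_{uk}(t)\in\{0,1\}$ that server $k$ offers queue $u$ at time $t$ is Bernoulli($\mu_{uk}$); all mutually independent and i.i.d. across slots. In each slot a policy schedules a matching between queues and servers, based only on past observations (scheduled matchings, observed services, arrivals) and independent internal randomness. $\kappa_u(t)$ is the server assigned to queue $u$, $S_u(t)=R_{u\kappa_u(t)}(t)$ (0 if unassigned), $Q_u(t)=(Q_u(t-1)+A_u(t)-S_u(t))^+$. For each $u$, $\mu^*_u=\max_k\mu_{uk}$ is attained at a unique $k^*_u$, with $k^*_u\ne k^*_{u'}$ for $u\ne u'$, and $\lambda_u<\mu^*_u$. The genie queue $Q^*_u(t)=(Q^*_u(t-1)+A_u(t)-R_{uk^*_u}(t))^+$ uses the same arrivals. $Q_u(0)$ and $Q^*_u(0)$ are distributed according to the stationary distribution of $Q^*_u$. $\Psi_u(t)=\mathbb{E}[Q_u(t)-Q^*_u(t)]$ and $\Delta_{uk}=\mu^*_u-\mu_{uk}$. *)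

theory Defs
  imports "HOL-Probability.Probability"
begin

(* Queues are indexed by 0..U-1, servers by 0..K-1.
   A (partial) matching assigns to each queue at most one server, injectively. *)
type_synonym matching = "nat \<Rightarrow> nat option"

definition matchings :: "nat \<Rightarrow> nat \<Rightarrow> matching set" where
  "matchings U K = {\<kappa>. (\<forall>u k. \<kappa> u = Some k \<longrightarrow> u < U \<and> k < K) \<and>
                        (\<forall>u u' k. \<kappa> u = Some k \<longrightarrow> \<kappa> u' = Some k \<longrightarrow> u = u')}"

(* observation of one slot: scheduled matching, observed services S_u(t), arrivals A_u(t) *)
type_synonym obs = "matching \<times> (nat \<Rightarrow> bool) \<times> (nat \<Rightarrow> bool)"

(* a (randomized) policy maps the history of past observations to a distribution
   over matchings (this encodes the independent internal randomness) *)
type_synonym policy = "obs list \<Rightarrow> matching pmf"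

(* system state: history, queue lengths Q(t), genie queue lengths Q*(t) *)
type_synonym state = "obs list \<times> (nat \<Rightarrow> nat) \<times> (nat \<Rightarrow> nat)"

(* one slot of the genie queue Q* with arrival rate l and service rate m;
   nat subtraction realises (.)^+ *)
definition genie_step :: "real \<Rightarrow> real \<Rightarrow> nat \<Rightarrow> nat pmf" where
  "genie_step l m q =
     do { a \<leftarrow> bernoulli_pmf l; r \<leftarrow> bernoulli_pmf m;
          return_pmf (q + of_bool a - of_bool r) }"

definition stationary_genie :: "real \<Rightarrow> real \<Rightarrow> nat pmf \<Rightarrow> bool" where
  "stationary_genie l m \<pi> \<longleftrightarrow> bind_pmf \<pi> (genie_step l m) = \<pi>"

definition sys_step ::
  "nat \<Rightarrow> nat \<Rightarrow> (nat \<Rightarrow> real) \<Rightarrow> (nat \<Rightarrow> nat \<Rightarrow> real) \<Rightarrow> (nat \<Rightarrow> nat) \<Rightarrow> policy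
     \<Rightarrow> state \<Rightarrow> state pmf" where
  "sys_step U K lam mu kstar pol st =
     (case st of (h, q, qs) \<Rightarrow>
       do { \<kappa> \<leftarrow> pol h;
            A \<leftarrow> Pi_pmf {..<U} False (\<lambda>u. bernoulli_pmf (lam u));
            R \<leftarrow> Pi_pmf ({..<U} \<times> {..<K}) False (\<lambda>(u, k). bernoulli_pmf (mu u k));
            let S = (\<lambda>u. case \<kappa> u of None \<Rightarrow> False | Some k \<Rightarrow> R (u, k));
            return_pmf (h @ [(\<kappa>, S, A)],
                        \<lambda>u. q u + of_bool (A u) - of_bool (S u),
                        \<lambda>u. qs u + of_bool (A u) - of_bool (R (u, kstar u))) })"

primrec sys ::
  "nat \<Rightarrow> nat \<Rightarrow> (nat \<Rightarrow> real) \<Rightarrow> (nat \<Rightarrow> nat \<Rightarrow> real) \<Rightarrow> (nat \<Rightarrow> nat) \<Rightarrow> policy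
     \<Rightarrow> ((nat \<Rightarrow> nat) \<times> (nat \<Rightarrow> nat)) pmf \<Rightarrow> nat \<Rightarrow> state pmf" where
  "sys U K lam mu kstar pol init 0 = map_pmf (\<lambda>(q, qs). ([], q, qs)) init"
| "sys U K lam mu kstar pol init (Suc t) =
     bind_pmf (sys U K lam mu kstar pol init t) (sys_step U K lam mu kstar pol)"

definition Psi ::
  "nat \<Rightarrow> nat \<Rightarrow> (nat \<Rightarrow> real) \<Rightarrow> (nat \<Rightarrow> nat \<Rightarrow> real) \<Rightarrow> (nat \<Rightarrow> nat) \<Rightarrow> policy
     \<Rightarrow> ((nat \<Rightarrow> nat) \<times> (nat \<Rightarrow> nat)) pmf \<Rightarrow> nat \<Rightarrow> nat \<Rightarrow> real" where
  "Psi U K lam mu kstar pol init u t =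
     measure_pmf.expectation (sys U K lam mu kstar pol init t)
       (\<lambda>(h, q, qs). real (q u) - real (qs u))"

(* kappa_u(t): server assigned to queue u at slot t (t >= 1), read off the history *)
definition kappa :: "state \<Rightarrow> nat \<Rightarrow> nat option" where
  "kappa st u = fst (last (fst st)) u"

end

theory Submission
  imports Defs
begin

(* Seen from queue u, the system is the genie queue except that in each slot the service rate is
   that of the server picked by the policy, at most mu*_u.  One genie step is monotone in the
   current length and antitone in the service rate, so by induction Q_u(t) stochastically
   dominates the stationary law pi of Q*_u.  Taking means over the last slot, serving queue u at
   rate mu_uk instead of mu*_u raises the expected length by at least lam_u Delta_uk (an
   unassigned queue loses lam_u mu*_u >= 0), while one genie step from Q_u(t-1) still dominates
   pi.  Hence E Q_u(t) >= E_pi + lam_u sum_k Delta_uk P[kappa_u(t) = k], and E Q*_u(t) = E_pi,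
   which is finite because pi is geometric. *)

section \<open>Stochastic order on distributions of natural numbers\<close>

definition stoch_le :: "nat pmf \<Rightarrow> nat pmf \<Rightarrow> bool" where
  "stoch_le p q \<longleftrightarrow> (\<forall>i. emeasure p {i..} \<le> emeasure q {i..})"

lemma stoch_le_refl: "stoch_le p p"
  by (simp add: stoch_le_def)

lemma stoch_le_trans: "stoch_le p q \<Longrightarrow> stoch_le q r \<Longrightarrow> stoch_le p r"
  unfolding stoch_le_def by (meson order_trans)

lemma nn_integral_mono_fun_eq_tails:
  fixes f :: "nat \<Rightarrow> real" and p :: "nat pmf"
  assumes "mono f" "0 \<le> f 0"
  shows "(\<integral>\<^sup>+x. f x \<partial>p) = ennreal (f 0) + (\<Sum>i. ennreal (f (Suc i) - f i) * emeasure p {Suc i..})"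
proof -
  have incr: "0 \<le> f (Suc i) - f i" for i
    using \<open>mono f\<close> by (simp add: mono_def)
  have expand: "ennreal (f x) = ennreal (f 0) + (\<Sum>i. ennreal (f (Suc i) - f i) * indicator {Suc i..} x)" for x
  proof -
    have "(\<Sum>i. ennreal (f (Suc i) - f i) * indicator {Suc i..} x) = (\<Sum>i<x. ennreal (f (Suc i) - f i))"
      by (subst suminf_finite[of "{..<x}"]) (auto intro!: sum.cong)
    also have "\<dots> = ennreal (\<Sum>i<x. f (Suc i) - f i)"
      using incr by (simp add: sum_ennreal)
    also have "(\<Sum>i<x. f (Suc i) - f i) = f x - f 0"
      by (simp add: sum_lessThan_telescope)
    finally show ?thesis
      using assms \<open>mono f\<close> by (simp add: ennreal_plus[symmetric] mono_def del: ennreal_plus)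
  qed
  have "(\<integral>\<^sup>+x. f x \<partial>p) = (\<integral>\<^sup>+x. ennreal (f 0) + (\<Sum>i. ennreal (f (Suc i) - f i) * indicator {Suc i..} x) \<partial>p)"
    by (rule nn_integral_cong) (rule expand)
  also have "\<dots> = ennreal (f 0) + (\<Sum>i. ennreal (f (Suc i) - f i) * emeasure p {Suc i..})"
    by (simp add: nn_integral_add nn_integral_suminf nn_integral_cmult_indicator
        measure_pmf.emeasure_space_1)
  finally show ?thesis .
qed

lemma nn_integral_real_eq_tails:
  fixes p :: "nat pmf"
  shows "(\<integral>\<^sup>+x. real x \<partial>p) = (\<Sum>i. emeasure p {Suc i..})"
  using nn_integral_mono_fun_eq_tails[of real p] by (simp add: mono_def)

lemma stoch_le_nn_integral_mono:
  fixes f :: "nat \<Rightarrow> real" and p q :: "nat pmf"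
  assumes "stoch_le p q" "mono f" "0 \<le> f 0"
  shows "(\<integral>\<^sup>+x. f x \<partial>p) \<le> (\<integral>\<^sup>+x. f x \<partial>q)"
  using assms unfolding nn_integral_mono_fun_eq_tails[OF assms(2,3)] stoch_le_def
  by (intro add_left_mono suminf_le mult_left_mono) auto

section \<open>The genie queue\<close>

lemma nn_integral_genie_step:
  assumes "0 \<le> a" "a \<le> 1" "0 \<le> m" "m \<le> 1"
  shows "(\<integral>\<^sup>+n. F n \<partial>genie_step a m q) =
     F (Suc q) * ennreal (a * (1 - m)) + F q * ennreal (a * m + (1 - a) * (1 - m))
     + F (q - 1) * ennreal ((1 - a) * m)"
proof -
  have "ennreal (a * m + (1 - a) * (1 - m)) = ennreal a * ennreal m + ennreal (1 - a) * ennreal (1 - m)"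
    using assms by (subst ennreal_plus) (auto simp: ennreal_mult)
  moreover have "ennreal (a * (1 - m)) = ennreal a * ennreal (1 - m)"
    "ennreal ((1 - a) * m) = ennreal (1 - a) * ennreal m"
    using assms by (simp_all add: ennreal_mult)
  ultimately show ?thesis
    using assms by (simp add: genie_step_def distrib_left distrib_right mult_ac add_ac)
qed

lemma emeasure_genie_step_tail:
  assumes "0 \<le> a" "a \<le> 1" "0 \<le> m" "m \<le> 1"
  shows "emeasure (genie_step a m q) {Suc i..} = ennreal
     (a * (1 - m) * of_bool (i \<le> q) + (a * m + (1 - a) * (1 - m)) * of_bool (Suc i \<le> q)
      + (1 - a) * m * of_bool (Suc (Suc i) \<le> q))"
proof -
  have "emeasure (genie_step a m q) {Suc i..} = (\<integral>\<^sup>+n. indicator {Suc i..} n \<partial>genie_step a m q)"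
    by simp
  also have "\<dots> = indicator {Suc i..} (Suc q) * ennreal (a * (1 - m))
      + indicator {Suc i..} q * ennreal (a * m + (1 - a) * (1 - m))
      + indicator {Suc i..} (q - 1) * ennreal ((1 - a) * m)"
    by (rule nn_integral_genie_step[OF assms])
  also have "\<dots> = ennreal (a * (1 - m) * of_bool (i \<le> q) + (a * m + (1 - a) * (1 - m)) * of_bool (Suc i \<le> q)
      + (1 - a) * m * of_bool (Suc (Suc i) \<le> q))"
    using assms by (auto simp: indicator_def ennreal_plus[symmetric] simp del: ennreal_plus)
  finally show ?thesis .
qed

lemma genie_step_tail_antimono:
  assumes "0 \<le> a" "a \<le> 1" "0 \<le> m" "m \<le> \<mu>" "\<mu> \<le> 1"
  shows "emeasure (genie_step a \<mu> q) {i..} \<le> emeasure (genie_step a m q) {i..}"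
proof (cases i)
  case 0
  then show ?thesis by (simp add: atLeast_0 measure_pmf.emeasure_space_1)
next
  case (Suc j)
  have "(1 - a) * m \<le> (1 - a) * \<mu>" "a * m \<le> a * \<mu>"
    using assms by (auto intro: mult_left_mono)
  then have "q = j \<or> q = Suc j \<Longrightarrow> a * (1 - \<mu>) * of_bool (j \<le> q)
      + (a * \<mu> + (1 - a) * (1 - \<mu>)) * of_bool (Suc j \<le> q) + (1 - a) * \<mu> * of_bool (Suc (Suc j) \<le> q)
    \<le> a * (1 - m) * of_bool (j \<le> q) + (a * m + (1 - a) * (1 - m)) * of_bool (Suc j \<le> q)
      + (1 - a) * m * of_bool (Suc (Suc j) \<le> q)"
    using assms by (auto simp: algebra_simps intro: mult_left_mono)
  moreover have "q < j \<or> q = j \<or> q = Suc j \<or> Suc (Suc j) \<le> q"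
    by linarith
  ultimately show ?thesis
    using assms unfolding Suc
    by (subst (1 2) emeasure_genie_step_tail) (auto intro!: ennreal_leI simp: algebra_simps)
qed

lemma stoch_le_bind_genie_step:
  assumes "stoch_le p q" "0 \<le> a" "a \<le> 1" "0 \<le> \<mu>" "\<mu> \<le> 1"
  shows "stoch_le (bind_pmf p (genie_step a \<mu>)) (bind_pmf q (genie_step a \<mu>))"
  unfolding stoch_le_def
proof
  fix i
  show "emeasure (bind_pmf p (genie_step a \<mu>)) {i..} \<le> emeasure (bind_pmf q (genie_step a \<mu>)) {i..}"
  proof (cases i)
    case 0
    then show ?thesis by (simp add: atLeast_0 measure_pmf.emeasure_space_1)
  next
    case (Suc j)
    define tail where "tail n = a * (1 - \<mu>) * of_bool (j \<le> n) + (a * \<mu> + (1 - a) * (1 - \<mu>)) * of_bool (Suc j \<le> n)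
      + (1 - a) * \<mu> * of_bool (Suc (Suc j) \<le> n)" for n :: nat
    have "mono tail" "0 \<le> tail 0"
      using assms by (auto simp: tail_def mono_def intro!: add_mono mult_left_mono)
    then have "(\<integral>\<^sup>+n. tail n \<partial>p) \<le> (\<integral>\<^sup>+n. tail n \<partial>q)"
      by (rule stoch_le_nn_integral_mono[OF assms(1)])
    then show ?thesis
      unfolding Suc emeasure_bind_pmf emeasure_genie_step_tail[OF assms(2-5)] tail_def .
  qed
qed

lemma nn_integral_genie_step_real:
  assumes "0 \<le> a" "a \<le> 1" "0 \<le> m" "m \<le> 1"
  shows "(\<integral>\<^sup>+n. real n \<partial>genie_step a m q) = ennreal (real q + a * (1 - m) - of_bool (0 < q) * ((1 - a) * m))"
proof (cases q)
  case 0
  then show ?thesis using assms by (simp add: nn_integral_genie_step)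
next
  case (Suc q')
  have "(\<integral>\<^sup>+n. real n \<partial>genie_step a m q) = ennreal
      (real (Suc q) * (a * (1 - m)) + real q * (a * m + (1 - a) * (1 - m)) + real (q - 1) * ((1 - a) * m))"
    using assms
    by (simp add: nn_integral_genie_step ennreal_mult[symmetric] ennreal_plus[symmetric] del: ennreal_plus)
  also have "\<dots> = ennreal (real q + a * (1 - m) - of_bool (0 < q) * ((1 - a) * m))"
    using Suc by (simp add: algebra_simps)
  finally show ?thesis .
qed

lemma genie_step_mean_antimono:
  assumes "0 \<le> a" "a \<le> 1" "0 \<le> m" "m \<le> \<mu>" "\<mu> \<le> 1"
  shows "(\<integral>\<^sup>+n. real n \<partial>genie_step a \<mu> q) + ennreal (a * (\<mu> - m)) \<le> (\<integral>\<^sup>+n. real n \<partial>genie_step a m q)"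
proof -
  define mean where "mean r = real q + a * (1 - r) - of_bool (0 < q) * ((1 - a) * r)" for r
  have "(1 - a) * m \<le> (1 - a) * \<mu>" "(1 - a) * \<mu> \<le> 1" "0 \<le> a * (1 - \<mu>)"
    using assms mult_le_one[of "1 - a" \<mu>] by (auto intro: mult_left_mono)
  then have "0 \<le> mean \<mu>" "mean \<mu> + a * (\<mu> - m) \<le> mean m"
    by (auto simp: mean_def algebra_simps)
  moreover have "0 \<le> a * (\<mu> - m)"
    using assms by simp
  ultimately have "ennreal (mean \<mu>) + ennreal (a * (\<mu> - m)) \<le> ennreal (mean m)"
    by (simp add: ennreal_plus[symmetric] ennreal_leI del: ennreal_plus)
  then show ?thesis
    using assms by (simp add: nn_integral_genie_step_real mean_def)
qed

lemma genie_step_mean_le: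
  assumes "0 \<le> a" "a \<le> 1" "0 \<le> m" "m \<le> 1"
  shows "(\<integral>\<^sup>+n. real n \<partial>genie_step a m q) \<le> ennreal (real q + 1)"
proof -
  have "a * (1 - m) \<le> 1" "0 \<le> (1 - a) * m"
    using assms mult_le_one[of a "1 - m"] by auto
  then have "real q + a * (1 - m) - of_bool (0 < q) * ((1 - a) * m) \<le> real q + 1"
    by simp
  then show ?thesis
    unfolding nn_integral_genie_step_real[OF assms] by (rule ennreal_leI)
qed

lemma stationary_genie_tail:
  assumes "0 \<le> a" "a < \<mu>" "\<mu> \<le> 1" and stat: "stationary_genie a \<mu> \<pi>"
  shows "measure_pmf.prob \<pi> {i..} = (a * (1 - \<mu>) / ((1 - a) * \<mu>)) ^ i"
proof -
  define P where "P i = measure_pmf.prob \<pi> {i..}" for i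
  define c1 where "c1 = a * (1 - \<mu>)"
  define c2 where "c2 = a * \<mu> + (1 - a) * (1 - \<mu>)"
  define c3 where "c3 = (1 - a) * \<mu>"
  have c: "0 \<le> c1" "0 \<le> c2" "0 < c3"
    using assms by (simp_all add: c1_def c2_def c3_def)
  have csum: "c1 + c2 + c3 = 1"
    by (simp add: c1_def c2_def c3_def algebra_simps)
  have balance: "P (Suc i) = c1 * P i + c2 * P (Suc i) + c3 * P (Suc (Suc i))" for i
  proof -
    have "ennreal (P (Suc i)) = emeasure (bind_pmf \<pi> (genie_step a \<mu>)) {Suc i..}"
      using stat by (simp add: P_def stationary_genie_def measure_pmf.emeasure_eq_measure)
    also have "\<dots> = (\<integral>\<^sup>+q. ennreal c1 * indicator {i..} q + ennreal c2 * indicator {Suc i..} q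
        + ennreal c3 * indicator {Suc (Suc i)..} q \<partial>\<pi>)"
      using assms c unfolding emeasure_bind_pmf
      by (intro nn_integral_cong)
        (auto simp: emeasure_genie_step_tail c1_def c2_def c3_def split: split_indicator)
    also have "\<dots> = ennreal (c1 * P i + c2 * P (Suc i) + c3 * P (Suc (Suc i)))"
      using c by (simp add: nn_integral_add nn_integral_cmult_indicator P_def
          measure_pmf.emeasure_eq_measure ennreal_mult)
    finally show ?thesis
      using c by (subst (asm) ennreal_inj) (auto simp: P_def)
  qed
  (* c3 * P (Suc i) - c1 * P i is the net probability flow from {Suc i..} down to i; by the balance
     equation it does not depend on i, and it tends to 0. *)
  define d where "d = c3 * P 1 - c1 * P 0"
  have flow: "c3 * P (Suc i) - c1 * P i = d" for i
  proof (induction i)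
    case 0
    then show ?case by (simp add: d_def)
  next
    case (Suc i)
    have "c2 = 1 - c1 - c3"
      using csum by simp
    with balance[of i] have "c3 * P (Suc (Suc i)) = (c1 + c3) * P (Suc i) - c1 * P i"
      by (simp add: algebra_simps)
    with Suc show ?case
      by (simp add: algebra_simps)
  qed
  have "P \<longlonglongrightarrow> measure_pmf.prob \<pi> (\<Inter>i. {i..})"
    unfolding P_def by (rule measure_pmf.finite_Lim_measure_decseq) (auto simp: decseq_def)
  moreover have "(\<Inter>i. {i::nat..}) = {}"
    using Suc_n_not_le_n by blast
  ultimately have "P \<longlonglongrightarrow> 0"
    by simp
  then have "(\<lambda>i. c3 * P (Suc i) - c1 * P i) \<longlonglongrightarrow> c3 * 0 - c1 * 0"
    by (intro tendsto_intros filterlim_compose[OF _ filterlim_Suc])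
  then have "d = 0"
    unfolding flow by (simp add: LIMSEQ_const_iff)
  then have "P (Suc i) = c1 / c3 * P i" for i
    using flow[of i] c(3) by (simp add: field_simps)
  moreover have "P 0 = 1"
    by (simp add: P_def atLeast_0)
  ultimately have "P i = (c1 / c3) ^ i" for i
    by (induction i) simp_all
  then show ?thesis
    by (simp add: P_def c1_def c3_def)
qed

lemma stationary_genie_mean:
  assumes "0 \<le> a" "a < \<mu>" "\<mu> \<le> 1" "stationary_genie a \<mu> \<pi>"
  shows "(\<integral>\<^sup>+x. real x \<partial>\<pi>) = ennreal (a * (1 - \<mu>) / (\<mu> - a))"
proof -
  define r where "r = a * (1 - \<mu>) / ((1 - a) * \<mu>)"
  have "a * (1 - \<mu>) < (1 - a) * \<mu>"
    using assms by (simp add: algebra_simps)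
  then have r: "0 \<le> r" "r < 1"
    using assms by (auto simp: r_def divide_less_eq)
  have "1 - r = (\<mu> - a) / ((1 - a) * \<mu>)"
    using assms by (simp add: r_def field_simps)
  then have "(\<lambda>i. r ^ Suc i) sums (a * (1 - \<mu>) / (\<mu> - a))"
    using sums_mult[OF geometric_sums[of r], of r] r assms by (simp add: r_def)
  moreover have "(\<integral>\<^sup>+x. real x \<partial>\<pi>) = (\<Sum>i. ennreal (r ^ Suc i))"
    unfolding nn_integral_real_eq_tails measure_pmf.emeasure_eq_measure
      stationary_genie_tail[OF assms] r_def ..
  ultimately show ?thesis
    using r by (simp add: suminf_ennreal2 sums_summable sums_unique[symmetric])
qed

lemma expectation_diff_ge_of_nn_integral:
  fixes M :: "'a pmf" and f g :: "'a \<Rightarrow> nat"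
  assumes gap: "(\<integral>\<^sup>+x. real (g x) \<partial>M) + ennreal c \<le> (\<integral>\<^sup>+x. real (f x) \<partial>M)"
    and finite: "(\<integral>\<^sup>+x. real (f x) \<partial>M) < top" and "0 \<le> c"
  shows "c \<le> measure_pmf.expectation M (\<lambda>x. real (f x) - real (g x))"
proof -
  have "(\<integral>\<^sup>+x. real (g x) \<partial>M) < top"
    using gap finite by (meson le_iff_add le_less_trans)
  then have "integrable M (\<lambda>x. real (f x))" "integrable M (\<lambda>x. real (g x))"
    using finite by (auto intro: integrableI_nonneg)
  then have "measure_pmf.expectation M (\<lambda>x. real (f x) - real (g x)) =
      enn2real (\<integral>\<^sup>+x. real (f x) \<partial>M) - enn2real (\<integral>\<^sup>+x. real (g x) \<partial>M)"
    by (simp add: integral_eq_nn_integral)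
  moreover have "enn2real (\<integral>\<^sup>+x. real (g x) \<partial>M) + c \<le> enn2real (\<integral>\<^sup>+x. real (f x) \<partial>M)"
    using enn2real_mono[OF gap finite] \<open>(\<integral>\<^sup>+x. real (g x) \<partial>M) < top\<close> \<open>0 \<le> c\<close>
    by (simp add: enn2real_plus)
  ultimately show ?thesis
    by simp
qed

section \<open>A single queue of the system\<close>

definition served_rate :: "(nat \<Rightarrow> nat \<Rightarrow> real) \<Rightarrow> nat \<Rightarrow> nat option \<Rightarrow> real" where
  "served_rate mu u = case_option 0 (mu u)"

lemma bernoulli_pmf_0: "bernoulli_pmf 0 = return_pmf False"
  by (rule pmf_eqI) (simp split: split_indicator)

lemma bind_pmf_return_marginals:
  assumes "map_pmf f p = p'" and "map_pmf f' q = q'"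
  shows "bind_pmf p (\<lambda>x. bind_pmf q (\<lambda>y. return_pmf (g (f x) (f' y)))) =
    bind_pmf p' (\<lambda>x. bind_pmf q' (\<lambda>y. return_pmf (g x y)))"
  using assms by (auto simp: bind_map_pmf)

lemma sys_step_queue_marginal:
  assumes "u < U" and "set_pmf (pol h) \<subseteq> matchings U K"
  shows "map_pmf (\<lambda>st. (kappa st u, fst (snd st) u)) (sys_step U K lam mu kstar pol (h, q, qs)) =
    bind_pmf (pol h) (\<lambda>\<kappa>. map_pmf (Pair (\<kappa> u)) (genie_step (lam u) (served_rate mu u (\<kappa> u)) (q u)))"
proof -
  let ?A = "Pi_pmf {..<U} False (\<lambda>u. bernoulli_pmf (lam u))"
  let ?R = "Pi_pmf ({..<U} \<times> {..<K}) False (\<lambda>(u, k). bernoulli_pmf (mu u k))"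
  let ?S = "\<lambda>\<kappa> R. case \<kappa> u of None \<Rightarrow> False | Some k \<Rightarrow> R (u, k)"
  have A: "map_pmf (\<lambda>A. A u) ?A = bernoulli_pmf (lam u)"
    using assms(1) by (simp add: Pi_pmf_component)
  have R: "map_pmf (?S \<kappa>) ?R = bernoulli_pmf (served_rate mu u (\<kappa> u))"
    if "\<kappa> \<in> set_pmf (pol h)" for \<kappa>
  proof (cases "\<kappa> u")
    case (Some k)
    with that assms have "k < K"
      by (auto simp: matchings_def)
    with Some assms(1) show ?thesis
      by (simp add: served_rate_def Pi_pmf_component)
  qed (simp add: served_rate_def bernoulli_pmf_0)
  show ?thesis
    unfolding sys_step_def
  proof (simp add: map_bind_pmf kappa_def Let_def, intro bind_pmf_cong refl)
    fix \<kappa> assume "\<kappa> \<in> set_pmf (pol h)"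
    from bind_pmf_return_marginals[OF A R[OF this], of "\<lambda>a r. (\<kappa> u, q u + of_bool a - of_bool r)"]
    show "bind_pmf ?A (\<lambda>A. bind_pmf ?R (\<lambda>R. return_pmf (\<kappa> u, q u + of_bool (A u) - of_bool (?S \<kappa> R)))) =
      map_pmf (Pair (\<kappa> u)) (genie_step (lam u) (served_rate mu u (\<kappa> u)) (q u))"
      by (simp add: genie_step_def map_bind_pmf)
  qed
qed

lemma sys_step_genie_marginal:
  assumes "u < U" and "kstar u < K"
  shows "map_pmf (\<lambda>st. snd (snd st) u) (sys_step U K lam mu kstar pol (h, q, qs)) =
    genie_step (lam u) (mu u (kstar u)) (qs u)"
proof -
  have "map_pmf (\<lambda>A. A u) (Pi_pmf {..<U} False (\<lambda>u. bernoulli_pmf (lam u))) = bernoulli_pmf (lam u)"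
    "map_pmf (\<lambda>R. R (u, kstar u)) (Pi_pmf ({..<U} \<times> {..<K}) False (\<lambda>(u, k). bernoulli_pmf (mu u k)))
      = bernoulli_pmf (mu u (kstar u))"
    using assms by (simp_all add: Pi_pmf_component)
  from bind_pmf_return_marginals[OF this, of "\<lambda>a r. qs u + of_bool a - of_bool r"] show ?thesis
    unfolding sys_step_def by (simp add: map_bind_pmf Let_def genie_step_def)
qed

locale queue_system =
  fixes U K :: nat and lam :: "nat \<Rightarrow> real" and mu :: "nat \<Rightarrow> nat \<Rightarrow> real"
    and kstar :: "nat \<Rightarrow> nat" and pol :: policy
    and init :: "((nat \<Rightarrow> nat) \<times> (nat \<Rightarrow> nat)) pmf" and u :: nat
  assumes queue: "u < U"
    and arrival_rate: "0 \<le> lam u" "lam u < mu u (kstar u)"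
    and best_server: "kstar u < K" "mu u (kstar u) \<le> 1"
    and service_rates: "\<And>k. k < K \<Longrightarrow> 0 \<le> mu u k \<and> mu u k \<le> mu u (kstar u)"
    and policy: "\<And>h. set_pmf (pol h) \<subseteq> matchings U K"
    and init_queue_stationary: "stationary_genie (lam u) (mu u (kstar u)) (map_pmf (\<lambda>p. fst p u) init)"
    and init_genie_stationary: "stationary_genie (lam u) (mu u (kstar u)) (map_pmf (\<lambda>p. snd p u) init)"
begin

abbreviation "state_law \<equiv> sys U K lam mu kstar pol init"
abbreviation "queue_law t \<equiv> map_pmf (\<lambda>st. fst (snd st) u) (state_law t)"
abbreviation "genie_law t \<equiv> map_pmf (\<lambda>st. snd (snd st) u) (state_law t)"

lemma rate_bounds:
  "0 \<le> lam u" "lam u \<le> 1" "0 \<le> mu u (kstar u)" "mu u (kstar u) \<le> 1"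
  using arrival_rate best_server by auto

lemma served_rate_bounds:
  assumes "\<kappa> \<in> set_pmf (pol h)"
  shows "0 \<le> served_rate mu u (\<kappa> u)" "served_rate mu u (\<kappa> u) \<le> mu u (kstar u)"
proof -
  have "0 \<le> served_rate mu u (\<kappa> u) \<and> served_rate mu u (\<kappa> u) \<le> mu u (kstar u)"
  proof (cases "\<kappa> u")
    case (Some k)
    with assms policy have "k < K"
      by (auto simp: matchings_def)
    with Some show ?thesis
      using service_rates by (simp add: served_rate_def)
  qed (use rate_bounds in \<open>simp add: served_rate_def\<close>)
  then show "0 \<le> served_rate mu u (\<kappa> u)" "served_rate mu u (\<kappa> u) \<le> mu u (kstar u)"
    by auto
qed

lemma nn_integral_state_law_Suc:
  "(\<integral>\<^sup>+st. F (kappa st u) (fst (snd st) u) \<partial>state_law (Suc t)) =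
   (\<integral>\<^sup>+st. \<integral>\<^sup>+\<kappa>. \<integral>\<^sup>+n. F (\<kappa> u) n
      \<partial>genie_step (lam u) (served_rate mu u (\<kappa> u)) (fst (snd st) u) \<partial>pol (fst st) \<partial>state_law t)"
proof -
  have "(\<integral>\<^sup>+st'. F (kappa st' u) (fst (snd st') u) \<partial>sys_step U K lam mu kstar pol st) =
    (\<integral>\<^sup>+\<kappa>. \<integral>\<^sup>+n. F (\<kappa> u) n \<partial>genie_step (lam u) (served_rate mu u (\<kappa> u)) (fst (snd st) u) \<partial>pol (fst st))"
    for st
  proof -
    obtain h q qs where st: "st = (h, q, qs)"
      by (cases st) auto
    have "(\<integral>\<^sup>+st'. F (kappa st' u) (fst (snd st') u) \<partial>sys_step U K lam mu kstar pol st) =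
      (\<integral>\<^sup>+x. case_prod F x \<partial>map_pmf (\<lambda>st. (kappa st u, fst (snd st) u)) (sys_step U K lam mu kstar pol (h, q, qs)))"
      by (simp add: st)
    also have "\<dots> = (\<integral>\<^sup>+\<kappa>. \<integral>\<^sup>+n. F (\<kappa> u) n \<partial>genie_step (lam u) (served_rate mu u (\<kappa> u)) (q u) \<partial>pol h)"
      unfolding sys_step_queue_marginal[OF queue policy] by simp
    finally show ?thesis
      by (simp add: st)
  qed
  then show ?thesis
    by simp
qed

lemma genie_law_eq: "genie_law t = map_pmf (\<lambda>p. snd p u) init"
proof (induction t)
  case 0
  then show ?case by (simp add: map_pmf_comp case_prod_beta)
next
  case (Suc t)
  have "genie_law (Suc t) = bind_pmf (state_law t) (\<lambda>st. genie_step (lam u) (mu u (kstar u)) (snd (snd st) u))"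
    using sys_step_genie_marginal[where U=U and K=K and kstar=kstar, OF queue best_server(1)]
    by (auto simp: map_bind_pmf intro!: bind_pmf_cong)
  also have "\<dots> = bind_pmf (genie_law t) (genie_step (lam u) (mu u (kstar u)))"
    by (simp add: bind_map_pmf)
  finally show ?case
    using Suc init_genie_stationary by (simp add: stationary_genie_def)
qed

lemma stoch_le_queue_law_Suc:
  "stoch_le (bind_pmf (queue_law t) (genie_step (lam u) (mu u (kstar u)))) (queue_law (Suc t))"
  unfolding stoch_le_def
proof
  fix i
  have "emeasure (bind_pmf (queue_law t) (genie_step (lam u) (mu u (kstar u)))) {i..} =
    (\<integral>\<^sup>+st. \<integral>\<^sup>+\<kappa>. emeasure (genie_step (lam u) (mu u (kstar u)) (fst (snd st) u)) {i..}
      \<partial>pol (fst st) \<partial>state_law t)"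
    by (simp add: measure_pmf.emeasure_space_1)
  also have "\<dots> \<le> (\<integral>\<^sup>+st. \<integral>\<^sup>+\<kappa>. emeasure (genie_step (lam u) (served_rate mu u (\<kappa> u)) (fst (snd st) u)) {i..}
      \<partial>pol (fst st) \<partial>state_law t)"
  proof (rule nn_integral_mono, rule nn_integral_mono_AE, rule AE_pmfI)
    fix st :: state and \<kappa> assume "\<kappa> \<in> set_pmf (pol (fst st))"
    with rate_bounds show "emeasure (genie_step (lam u) (mu u (kstar u)) (fst (snd st) u)) {i..}
      \<le> emeasure (genie_step (lam u) (served_rate mu u (\<kappa> u)) (fst (snd st) u)) {i..}"
      by (intro genie_step_tail_antimono served_rate_bounds)
  qed
  also have "\<dots> = (\<integral>\<^sup>+st. indicator {i..} (fst (snd st) u) \<partial>state_law (Suc t))"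
    unfolding nn_integral_state_law_Suc[where F="\<lambda>_ n. indicator {i..} n"] by simp
  also have "\<dots> = emeasure (queue_law (Suc t)) {i..}"
    by (subst nn_integral_indicator[symmetric]) (simp_all del: sys.simps)
  finally show "emeasure (bind_pmf (queue_law t) (genie_step (lam u) (mu u (kstar u)))) {i..}
    \<le> emeasure (queue_law (Suc t)) {i..}" .
qed

lemma stoch_le_queue_law: "stoch_le (map_pmf (\<lambda>p. fst p u) init) (queue_law t)"
proof (induction t)
  case 0
  then show ?case by (simp add: map_pmf_comp case_prod_beta stoch_le_refl)
next
  case (Suc t)
  then have "stoch_le (bind_pmf (map_pmf (\<lambda>p. fst p u) init) (genie_step (lam u) (mu u (kstar u))))
      (bind_pmf (queue_law t) (genie_step (lam u) (mu u (kstar u))))"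
    using rate_bounds by (intro stoch_le_bind_genie_step)
  then show ?case
    using init_queue_stationary stoch_le_queue_law_Suc
    by (auto simp: stationary_genie_def intro: stoch_le_trans)
qed

lemma queue_mean_le: "(\<integral>\<^sup>+n. real n \<partial>queue_law t) \<le> (\<integral>\<^sup>+n. real n \<partial>map_pmf (\<lambda>p. fst p u) init) + t"
proof (induction t)
  case 0
  then show ?case by (simp add: case_prod_beta)
next
  case (Suc t)
  have "(\<integral>\<^sup>+n. real n \<partial>queue_law (Suc t)) \<le> (\<integral>\<^sup>+st. \<integral>\<^sup>+\<kappa>. ennreal (real (fst (snd st) u) + 1)
      \<partial>pol (fst st) \<partial>state_law t)"
    unfolding nn_integral_map_pmf nn_integral_state_law_Suc[where F="\<lambda>_ n. ennreal (real n)"]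
  proof (rule nn_integral_mono, rule nn_integral_mono_AE, rule AE_pmfI)
    fix st :: state and \<kappa> assume "\<kappa> \<in> set_pmf (pol (fst st))"
    with rate_bounds show "(\<integral>\<^sup>+n. real n \<partial>genie_step (lam u) (served_rate mu u (\<kappa> u)) (fst (snd st) u))
      \<le> ennreal (real (fst (snd st) u) + 1)"
      using served_rate_bounds by (intro genie_step_mean_le) force+
  qed
  also have "\<dots> = (\<integral>\<^sup>+n. real n \<partial>queue_law t) + 1"
    by (simp add: measure_pmf.emeasure_space_1 nn_integral_add)
  finally show ?case
    using Suc.IH by (simp add: add.assoc add_right_mono order_trans)
qed

definition mismatch_cost :: "nat \<Rightarrow> real" where
  "mismatch_cost t = lam u * (\<Sum>k\<in>{..<K} - {kstar u}.
     (mu u (kstar u) - mu u k) * measure_pmf.prob (state_law t) {st. kappa st u = Some k})"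

lemma mismatch_cost_le:
  "ennreal (mismatch_cost t) \<le>
    (\<integral>\<^sup>+st. ennreal (lam u * (mu u (kstar u) - served_rate mu u (kappa st u))) \<partial>state_law t)"
proof -
  define c where "c k = ennreal (lam u * (mu u (kstar u) - mu u k))" for k
  have nonneg: "0 \<le> lam u * (mu u (kstar u) - mu u k)" if "k \<in> {..<K} - {kstar u}" for k
    using that rate_bounds service_rates[of k] by auto
  have "mismatch_cost t = (\<Sum>k\<in>{..<K} - {kstar u}.
      lam u * (mu u (kstar u) - mu u k) * measure_pmf.prob (state_law t) {st. kappa st u = Some k})"
    by (simp add: mismatch_cost_def sum_distrib_left mult.assoc)
  then have "ennreal (mismatch_cost t) = (\<Sum>k\<in>{..<K} - {kstar u}.
      ennreal (lam u * (mu u (kstar u) - mu u k) * measure_pmf.prob (state_law t) {st. kappa st u = Some k}))"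
    by (auto intro!: sum_ennreal[symmetric] mult_nonneg_nonneg nonneg)
  also have "\<dots> = (\<Sum>k\<in>{..<K} - {kstar u}. c k * emeasure (state_law t) {st. kappa st u = Some k})"
    using nonneg by (intro sum.cong refl) (simp add: c_def ennreal_mult measure_pmf.emeasure_eq_measure)
  also have "\<dots> = (\<integral>\<^sup>+st. (\<Sum>k\<in>{..<K} - {kstar u}. c k * indicator {st. kappa st u = Some k} st) \<partial>state_law t)"
    by (subst nn_integral_sum) (simp_all add: nn_integral_cmult_indicator)
  also have "\<dots> \<le> (\<integral>\<^sup>+st. ennreal (lam u * (mu u (kstar u) - served_rate mu u (kappa st u))) \<partial>state_law t)"
  proof (rule nn_integral_mono)
    fix st :: state
    show "(\<Sum>k\<in>{..<K} - {kstar u}. c k * indicator {st. kappa st u = Some k} st)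
      \<le> ennreal (lam u * (mu u (kstar u) - served_rate mu u (kappa st u)))"
      by (cases "kappa st u") (auto simp: indicator_def c_def served_rate_def Int_insert_right)
  qed
  finally show ?thesis .
qed

lemma queue_mean_drift:
  "(\<integral>\<^sup>+n. real n \<partial>bind_pmf (queue_law t) (genie_step (lam u) (mu u (kstar u))))
     + ennreal (mismatch_cost (Suc t)) \<le> (\<integral>\<^sup>+n. real n \<partial>queue_law (Suc t))"
proof -
  define gap where "gap ko = ennreal (lam u * (mu u (kstar u) - served_rate mu u ko))" for ko
  have "(\<integral>\<^sup>+n. real n \<partial>bind_pmf (queue_law t) (genie_step (lam u) (mu u (kstar u))))
      + (\<integral>\<^sup>+st. gap (kappa st u) \<partial>state_law (Suc t)) =
    (\<integral>\<^sup>+st. \<integral>\<^sup>+\<kappa>. (\<integral>\<^sup>+n. real n \<partial>genie_step (lam u) (mu u (kstar u)) (fst (snd st) u)) + gap (\<kappa> u)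
      \<partial>pol (fst st) \<partial>state_law t)"
    unfolding nn_integral_state_law_Suc[where F="\<lambda>ko _. gap ko"]
    by (simp add: nn_integral_add measure_pmf.emeasure_space_1)
  also have "\<dots> \<le> (\<integral>\<^sup>+st. \<integral>\<^sup>+\<kappa>. \<integral>\<^sup>+n. real n \<partial>genie_step (lam u) (served_rate mu u (\<kappa> u)) (fst (snd st) u)
      \<partial>pol (fst st) \<partial>state_law t)"
  proof (rule nn_integral_mono, rule nn_integral_mono_AE, rule AE_pmfI)
    fix st :: state and \<kappa> assume "\<kappa> \<in> set_pmf (pol (fst st))"
    with rate_bounds show "(\<integral>\<^sup>+n. real n \<partial>genie_step (lam u) (mu u (kstar u)) (fst (snd st) u)) + gap (\<kappa> u)
      \<le> (\<integral>\<^sup>+n. real n \<partial>genie_step (lam u) (served_rate mu u (\<kappa> u)) (fst (snd st) u))"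
      unfolding gap_def by (intro genie_step_mean_antimono served_rate_bounds)
  qed
  also have "\<dots> = (\<integral>\<^sup>+n. real n \<partial>queue_law (Suc t))"
    unfolding nn_integral_map_pmf nn_integral_state_law_Suc[where F="\<lambda>_ n. ennreal (real n)"] ..
  finally show ?thesis
    using mismatch_cost_le[of "Suc t"] unfolding gap_def by (meson add_left_mono order_trans)
qed

lemma queue_mean_lower_bound:
  "(\<integral>\<^sup>+n. real n \<partial>map_pmf (\<lambda>p. fst p u) init) + ennreal (mismatch_cost (Suc t))
     \<le> (\<integral>\<^sup>+n. real n \<partial>queue_law (Suc t))"
proof -
  have "stoch_le (bind_pmf (map_pmf (\<lambda>p. fst p u) init) (genie_step (lam u) (mu u (kstar u))))
      (bind_pmf (queue_law t) (genie_step (lam u) (mu u (kstar u))))"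
    using rate_bounds by (intro stoch_le_bind_genie_step stoch_le_queue_law)
  then have "(\<integral>\<^sup>+n. real n \<partial>map_pmf (\<lambda>p. fst p u) init)
      \<le> (\<integral>\<^sup>+n. real n \<partial>bind_pmf (queue_law t) (genie_step (lam u) (mu u (kstar u))))"
    unfolding init_queue_stationary[unfolded stationary_genie_def]
    by (rule stoch_le_nn_integral_mono) (simp_all add: mono_def)
  then show ?thesis
    using queue_mean_drift by (meson add_right_mono order_trans)
qed

end

theorem lemma11:
  fixes U K :: nat and lam :: "nat \<Rightarrow> real" and mu :: "nat \<Rightarrow> nat \<Rightarrow> real"
    and kstar :: "nat \<Rightarrow> nat" and pol :: policy
    and init :: "((nat \<Rightarrow> nat) \<times> (nat \<Rightarrow> nat)) pmf"
    and u t :: nat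
  assumes "1 \<le> U" and "U \<le> K"
    and "\<And>v. v < U \<Longrightarrow> 0 \<le> lam v \<and> lam v \<le> 1"
    and "\<And>v k. v < U \<Longrightarrow> k < K \<Longrightarrow> 0 \<le> mu v k \<and> mu v k \<le> 1"
    and "\<And>v. v < U \<Longrightarrow> kstar v < K"
    and "\<And>v k. v < U \<Longrightarrow> k < K \<Longrightarrow> k \<noteq> kstar v \<Longrightarrow> mu v k < mu v (kstar v)"
    and "inj_on kstar {..<U}"
    and "\<And>v. v < U \<Longrightarrow> lam v < mu v (kstar v)"
    and "\<And>h. set_pmf (pol h) \<subseteq> matchings U K"
    and "\<And>v. v < U \<Longrightarrow>
           stationary_genie (lam v) (mu v (kstar v)) (map_pmf (\<lambda>p. fst p v) init)"
    and "\<And>v. v < U \<Longrightarrow>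
           stationary_genie (lam v) (mu v (kstar v)) (map_pmf (\<lambda>p. snd p v) init)"
    and "u < U" and "1 \<le> t"
  shows "Psi U K lam mu kstar pol init u t \<ge>
           lam u * (\<Sum>k\<in>{..<K} - {kstar u}.
              (mu u (kstar u) - mu u k) *
              measure_pmf.prob (sys U K lam mu kstar pol init t) {st. kappa st u = Some k})"
proof -
  have "0 \<le> mu u k \<and> mu u k \<le> mu u (kstar u)" if "k < K" for k
    using assms(4,6,12) that by (cases "k = kstar u") (auto intro: less_imp_le)
  then interpret queue_system U K lam mu kstar pol init u
    using assms(3-5,8-12) by unfold_locales auto
  obtain s where t: "t = Suc s"
    using \<open>1 \<le> t\<close> by (cases t) auto
  note stationary_mean = stationary_genie_mean[OF rate_bounds(1) arrival_rate(2) rate_bounds(4)]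
  have "(\<integral>\<^sup>+n. real n \<partial>map_pmf (\<lambda>p. snd p u) init) = (\<integral>\<^sup>+n. real n \<partial>map_pmf (\<lambda>p. fst p u) init)"
    "(\<integral>\<^sup>+n. real n \<partial>map_pmf (\<lambda>p. fst p u) init) < top"
    unfolding stationary_mean[OF init_queue_stationary] stationary_mean[OF init_genie_stationary]
    by simp_all
  then have "(\<integral>\<^sup>+n. real n \<partial>genie_law t) + ennreal (mismatch_cost t) \<le> (\<integral>\<^sup>+n. real n \<partial>queue_law t)"
    "(\<integral>\<^sup>+n. real n \<partial>queue_law t) < top"
    using queue_mean_lower_bound[of s] queue_mean_le[of t] genie_law_eq[of t]
    by (auto simp: t ennreal_of_nat_eq_real_of_nat intro: le_less_trans)
  moreover have "0 \<le> mismatch_cost t"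
    using rate_bounds service_rates unfolding mismatch_cost_def
    by (intro mult_nonneg_nonneg sum_nonneg) auto
  ultimately show ?thesis
    unfolding Psi_def mismatch_cost_def case_prod_beta
    by (intro expectation_diff_ge_of_nn_integral) simp_all
qed

end
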